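(* Let $P$ be a finite nonempty set of nonempty linear strings over an ordered finite alphabet $\Sigma$. Let $c$ be any circular superstring of $P\cup\overline P$. Then $g(c)$ is a linear superstring of $P$, and $|g(c)|\le |c|/2$.
   Context: Let $\overline\Sigma=\{\overline a: a\in\Sigma\}$ be a disjoint copy of $\Sigma$. The alphabet $\Sigma\cup\overline\Sigma$ is totally ordered so that $a<\overline b$ for all $a\in\Sigma$ and $\overline b\in\overline\Sigma$. For $w=a_1\dots a_k$ over $\Sigma$, set $\overline w=\overline{a_1}\dots\overline{a_k}$, and let $\overline P=\{\overline w: w\in P\}$. A circular string $\langle a_1\dots a_n\rangle$ has length $n$, and its substrings are the finite substrings of $(a_1\dots a_n)^\infty$. A (circular or linear) superstring of a set of strings contains each of them as a substring. For a circular superstring $c$ of $P\cup\overline P$ of length $k$, let $l(c)$ be the lexicographically smallest linear string among the circular shifts of $c$ whose first letter is in $\Sigma$ and whose $k$-th (last) letter is in $\overline\Sigma$. For a linear string $w$ and a sub-alphabet $\Sigma''$, $w|_{\Sigma''}$ denotes the subsequence of $w$ formed by its letters in $\Sigma''$. Let $g'(c)$ be whichever of $l(c)|_{\Sigma}$ and $l(c)|_{\overline\Sigma}$ has minimal length. Then set $g(c)=a_1\dots a_k$ if either $g'(c)=a_1\dots a_k\in\Sigma^*$ or $g'(c)=\overline{a_1}\dots\overline{a_k}\in\overline\Sigma^*$. *)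

theory Defs
  imports Main "HOL-Library.Sublist"
begin

text \<open>Letters of \<Sigma> \<union> \<Sigma>bar are modelled as Inl a (for a) and Inr a (for abar).\<close>

definition bar_word :: "'a list \<Rightarrow> ('a + 'a) list" where
  "bar_word w = map Inr w"

definition plain_word :: "'a list \<Rightarrow> ('a + 'a) list" where
  "plain_word w = map Inl w"

definition letter_less :: "('a::linorder + 'a) \<Rightarrow> ('a + 'a) \<Rightarrow> bool" where
  "letter_less x y = (case (x, y) of
      (Inl a, Inl b) \<Rightarrow> a < b
    | (Inl _, Inr _) \<Rightarrow> True
    | (Inr _, Inl _) \<Rightarrow> False
    | (Inr a, Inr b) \<Rightarrow> a < b)"

definition lex_less :: "('a::linorder + 'a) list \<Rightarrow> ('a + 'a) list \<Rightarrow> bool" where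
  "lex_less u v = ((u, v) \<in> lexord {(x, y). letter_less x y})"

text \<open>A circular string is represented by a nonempty list c (any representative);
  w is a substring of the circular string iff it is a finite substring of c^\<infinity>.\<close>
definition circ_substring :: "'b list \<Rightarrow> 'b list \<Rightarrow> bool" where
  "circ_substring w c = (\<exists>i. w = map (\<lambda>j. c ! ((i + j) mod length c)) [0..<length w])"

definition circ_superstring :: "'b list \<Rightarrow> 'b list set \<Rightarrow> bool" where
  "circ_superstring c S = (\<forall>w\<in>S. circ_substring w c)"

definition linear_superstring :: "'b list \<Rightarrow> 'b list set \<Rightarrow> bool" where
  "linear_superstring s S = (\<forall>w\<in>S. sublist w s)"

definition circ_shifts :: "'b list \<Rightarrow> 'b list set" where
  "circ_shifts c = {rotate i c | i. i < length c}"

definition l_candidates :: "('a + 'a) list \<Rightarrow> ('a + 'a) list set" where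
  "l_candidates c = {s \<in> circ_shifts c. isl (hd s) \<and> \<not> isl (last s)}"

definition l_of :: "('a::linorder + 'a) list \<Rightarrow> ('a + 'a) list" where
  "l_of c = (SOME s. s \<in> l_candidates c \<and> (\<forall>t\<in>l_candidates c. s = t \<or> lex_less s t))"

definition g_of :: "('a::linorder + 'a) list \<Rightarrow> 'a list" where
  "g_of c = (let u = filter isl (l_of c); v = filter (\<lambda>x. \<not> isl x) (l_of c)
             in if length u \<le> length v then map projl u else map projr v)"

end

theory Submission
  imports Defs
begin

(* A circular occurrence of a word in a rotation s of c is a linear occurrence in s unless it
  wraps around, and a wrapping occurrence contains both the last and the first letter of s.
  Since c contains barred and unbarred letters, the shift l(c) exists; it starts with an
  unbarred and ends with a barred letter, so the words of plain_word ` P and of bar_word ` P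
  all occur linearly in l(c). Hence both projections of l(c) are superstrings of P, and the
  shorter one has at most half the length of c. *)

lemma letter_less_strict_total:
  "trans {(x, y). letter_less x y}" "irrefl {(x, y). letter_less x y}"
  "total {(x::'a::linorder + 'a, y). letter_less x y}"
  unfolding trans_def irrefl_def total_on_def letter_less_def
  by (auto split: sum.splits)

lemma lex_less_trans: "lex_less u v \<Longrightarrow> lex_less v w \<Longrightarrow> lex_less u w"
  unfolding lex_less_def using lexord_trans letter_less_strict_total(1) by blast

lemma lex_less_irrefl: "\<not> lex_less u u"
  unfolding lex_less_def
  by (rule lexord_irreflexive) (use letter_less_strict_total(2) in \<open>simp add: irrefl_def\<close>)

lemma lex_less_linear: "u = v \<or> lex_less u v \<or> lex_less v u"
  using total_lexord[OF letter_less_strict_total(3)]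
  unfolding lex_less_def total_on_def by blast

lemma ex_lex_least:
  assumes "finite S" and "s \<in> S"
  shows "\<exists>m\<in>S. \<forall>t\<in>S. m = t \<or> lex_less m t"
proof -
  let ?r = "{(t, u). t \<in> S \<and> u \<in> S \<and> lex_less t u}"
  have "finite ?r"
    by (rule finite_subset[of _ "S \<times> S"]) (use assms(1) in auto)
  moreover have "acyclic ?r"
  proof -
    have "trans ?r" by (auto intro: transI lex_less_trans)
    then show ?thesis by (simp add: acyclic_def lex_less_irrefl)
  qed
  ultimately obtain m where "m \<in> S" and "\<And>t. (t, m) \<in> ?r \<Longrightarrow> t \<notin> S"
    using wfE_min[OF finite_acyclic_wf assms(2)] by blast
  then show ?thesis using lex_less_linear by blast
qed

lemma l_of_in_l_candidates:
  assumes "s \<in> l_candidates c"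
  shows "l_of c \<in> l_candidates c"
proof -
  have "finite (circ_shifts c)"
    unfolding circ_shifts_def by (simp add: setcompr_eq_image)
  then have "finite (l_candidates c)"
    unfolding l_candidates_def by simp
  with assms have "\<exists>s. s \<in> l_candidates c \<and> (\<forall>t\<in>l_candidates c. s = t \<or> lex_less s t)"
    using ex_lex_least by blast
  then show ?thesis
    unfolding l_of_def by (rule someI2_ex) blast
qed

lemma rotate_in_circ_shifts: "c \<noteq> [] \<Longrightarrow> rotate i c \<in> circ_shifts c"
  unfolding circ_shifts_def by (subst rotate_conv_mod) auto

lemma ex_rotate_hd_last:
  assumes "x \<in> set c" "Q x" "y \<in> set c" "\<not> Q y"
  shows "\<exists>i. Q (hd (rotate i c)) \<and> \<not> Q (last (rotate i c))"
proof -
  obtain xs ys where c: "c = xs @ y # ys"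
    using split_list assms(3) by metis
  define t where "t = ys @ xs"
  define u where "u = takeWhile (\<lambda>z. \<not> Q z) t"
  define v where "v = dropWhile (\<lambda>z. \<not> Q z) t"
  have "x \<in> set t" using assms c unfolding t_def by auto
  then have v: "v \<noteq> []" "Q (hd v)"
    using assms(2) hd_dropWhile[of "\<lambda>z. \<not> Q z" t] unfolding v_def by auto
  have "rotate (length (xs @ [y])) c = u @ v @ [y]"
    using rotate_append[of "xs @ [y]" ys] unfolding c u_def v_def t_def by simp
  then have rotated: "rotate (length u) (rotate (length (xs @ [y])) c) = v @ y # u"
    using rotate_append[of u "v @ [y]"] by simp
  have "last (v @ y # u) \<in> set (y # u)"
    by (simp add: last_append)
  then have "\<not> Q (last (v @ y # u))"
    using assms(4) set_takeWhileD unfolding u_def by fastforce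
  then show ?thesis
    using v rotated by (metis hd_append2 rotate_rotate)
qed

lemma set_circ_substring:
  assumes "circ_substring w c" and "c \<noteq> []"
  shows "set w \<subseteq> set c"
proof -
  obtain p where w: "w = map (\<lambda>j. c ! ((p + j) mod length c)) [0..<length w]"
    using assms(1) unfolding circ_substring_def by blast
  show ?thesis
    using assms(2) by (subst w) (auto intro!: nth_mem)
qed

lemma circ_substring_rotate:
  assumes "circ_substring w c"
  shows "circ_substring w (rotate i c)"
proof (cases "c = []")
  case False
  define n where "n = length c"
  then have n: "n > 0" using False by simp
  obtain p where w: "w = map (\<lambda>j. c ! ((p + j) mod n)) [0..<length w]"
    using assms unfolding circ_substring_def n_def by blast
  define q where "q = p + (n - i mod n)"
  have "rotate i c ! ((q + j) mod n) = c ! ((p + j) mod n)" for j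
  proof -
    have i_shift: "i + (n - i mod n) = i div n * n + n"
      using div_mult_mod_eq[of i n] mod_less_divisor[OF n, of i] by linarith
    have "(i + (q + j) mod n) mod n = (i + (q + j)) mod n"
      by (simp add: mod_add_right_eq)
    also have "i + (q + j) = (p + j) + (i div n + 1) * n"
      using i_shift unfolding q_def by simp
    also have "((p + j) + (i div n + 1) * n) mod n = (p + j) mod n"
      by (rule mod_mult_self1)
    finally show ?thesis
      using n nth_rotate[of "(q + j) mod n" c i] unfolding n_def by simp
  qed
  then have "w = map (\<lambda>j. rotate i c ! ((q + j) mod n)) [0..<length w]"
    by (subst w) simp
  then show ?thesis
    unfolding circ_substring_def n_def by auto
qed (use assms in simp)

lemma sublist_if_circ_substring_misses_hd_or_last:
  assumes "circ_substring w c" and "c \<noteq> []" and "hd c \<notin> set w \<or> last c \<notin> set w"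
  shows "sublist w c"
proof -
  define n where "n = length c"
  then have n: "n > 0" using assms(2) by simp
  obtain p where w: "w = map (\<lambda>j. c ! ((p + j) mod n)) [0..<length w]"
    using assms unfolding circ_substring_def n_def by blast
  define r where "r = p mod n"
  have r: "r < n" and mod_shift: "(p + j) mod n = (r + j) mod n" for j
    using n unfolding r_def by (simp_all add: mod_add_left_eq)
  have nth_w: "w ! j = c ! ((r + j) mod n)" if "j < length w" for j
    using that mod_shift by (subst w) simp
  show ?thesis
  proof (cases "r + length w \<le> n")
    case True
    then have "w = take (length w) (drop r c)"
      using nth_w by (intro nth_equalityI) (simp_all add: n_def)
    then show ?thesis
      by (metis sublist_drop sublist_order.dual_order.trans sublist_take)
  next
    case False
    then have "n - r < length w" "n - 1 - r < length w"
      using r by linarith+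
    then have "w ! (n - r) = hd c" "w ! (n - 1 - r) = last c"
      using nth_w r assms(2) by (simp_all add: hd_conv_nth last_conv_nth n_def)
    then have "hd c \<in> set w" "last c \<in> set w"
      using nth_mem[OF \<open>n - r < length w\<close>] nth_mem[OF \<open>n - 1 - r < length w\<close>] by simp_all
    with assms(3) show ?thesis by blast
  qed
qed

lemma sublist_map_filter:
  "sublist xs ys \<Longrightarrow> sublist (map f (filter P xs)) (map f (filter P ys))"
  unfolding sublist_def by fastforce

lemma l_candidate_projections_superstrings:
  assumes "s \<in> l_candidates c" and "circ_superstring c (plain_word ` P \<union> bar_word ` P)"
  shows "linear_superstring (map projl (filter isl s)) P"
    and "linear_superstring (map projr (filter (\<lambda>x. \<not> isl x) s)) P"
proof -
  obtain i where s: "s = rotate i c" "i < length c" and "isl (hd s)" "\<not> isl (last s)"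
    using assms(1) unfolding l_candidates_def circ_shifts_def by blast
  then have "s \<noteq> []" by auto
  show "linear_superstring (map projl (filter isl s)) P"
    unfolding linear_superstring_def
  proof
    fix w assume "w \<in> P"
    then have "circ_substring (map Inl w) s"
      using assms(2) circ_substring_rotate unfolding s circ_superstring_def plain_word_def by blast
    then have "sublist (map Inl w) s"
      by (rule sublist_if_circ_substring_misses_hd_or_last)
        (use \<open>s \<noteq> []\<close> \<open>\<not> isl (last s)\<close> in auto)
    from sublist_map_filter[OF this, of projl isl] show "sublist w (map projl (filter isl s))"
      by (simp add: comp_def)
  qed
  show "linear_superstring (map projr (filter (\<lambda>x. \<not> isl x) s)) P"
    unfolding linear_superstring_def
  proof
    fix w assume "w \<in> P"
    then have "circ_substring (map Inr w) s"
      using assms(2) circ_substring_rotate unfolding s circ_superstring_def bar_word_def by blast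
    then have "sublist (map Inr w) s"
      by (rule sublist_if_circ_substring_misses_hd_or_last)
        (use \<open>s \<noteq> []\<close> \<open>isl (hd s)\<close> in auto)
    from sublist_map_filter[OF this, of projr "\<lambda>x. \<not> isl x"]
    show "sublist w (map projr (filter (\<lambda>x. \<not> isl x) s))"
      by (simp add: comp_def)
  qed
qed

theorem lemma4:
  fixes P :: "('a::{linorder, finite}) list set"
    and c :: "('a + 'a) list"
  assumes "finite P" and "P \<noteq> {}" and "\<forall>w\<in>P. w \<noteq> []"
    and "c \<noteq> []"
    and "circ_superstring c (plain_word ` P \<union> bar_word ` P)"
  shows "linear_superstring (g_of c) P \<and> 2 * length (g_of c) \<le> length c"
proof -
  obtain w where "w \<in> P" "w \<noteq> []"
    using assms(2,3) by blast
  then have "circ_substring (map Inl w) c" "circ_substring (map Inr w) c"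
    using assms(5) unfolding circ_superstring_def plain_word_def bar_word_def by blast+
  then have "set (map Inl w) \<subseteq> set c" "set (map Inr w) \<subseteq> set c"
    using set_circ_substring assms(4) by blast+
  then have "Inl (hd w) \<in> set c" "Inr (hd w) \<in> set c"
    using hd_in_set[OF \<open>w \<noteq> []\<close>] by auto
  then obtain i where "isl (hd (rotate i c))" "\<not> isl (last (rotate i c))"
    using ex_rotate_hd_last[of "Inl (hd w)" c isl "Inr (hd w)"] by auto
  then have "rotate i c \<in> l_candidates c"
    using rotate_in_circ_shifts[OF assms(4)] unfolding l_candidates_def by blast
  then have l: "l_of c \<in> l_candidates c"
    by (rule l_of_in_l_candidates)
  then have "length (l_of c) = length c"
    unfolding l_candidates_def circ_shifts_def by auto
  then have "length (filter isl (l_of c)) + length (filter (\<lambda>x. \<not> isl x) (l_of c)) = length c"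
    using sum_length_filter_compl by metis
  then show ?thesis
    using l_candidate_projections_superstrings[OF l assms(5)] unfolding g_of_def Let_def by simp
qed

end
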